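(* Let $f:[0,\infty)\to\mathbb{R}$ be differentiable, let $0<a<b<\infty$, and suppose $f'$ is Lebesgue integrable on $[a,b]$. Let $(\alpha,m)\in(0,1]^2$ and $q\ge 1$, and suppose $|f'|^q$ is $(\alpha,m)$-GA-convex on $[0,\max\{a^{1/m},b\}]$. Then \[ \biggl|\frac{b^2f(b)-a^2f(a)}{2}-\int_a^b xf(x)\,dx\biggr|\le\frac{\ln b-\ln a}{2}\bigl[L(a^3,b^3)\bigr]^{1-1/q}\Bigl\{m\bigl[L(a^3,b^3)-G(\alpha,3)\bigr]\bigl|f'(a^{1/m})\bigr|^q+G(\alpha,3)|f'(b)|^q\Bigr\}^{1/q}. \]
   Context: For $c>0$, $h:[0,c]\to\mathbb{R}$ and $(\alpha,m)\in(0,1]^2$, $h$ is called $(\alpha,m)$-GA-convex on $[0,c]$ if $h\bigl(x^\lambda y^{m(1-\lambda)}\bigr)\le\lambda^\alpha h(x)+m(1-\lambda^\alpha)h(y)$ for all $x,y\in[0,c]$ and all $\lambda\in[0,1]$ (with the convention $0^0=1$). For fixed $0<a<b$ and $\ell\ge0$, $\alpha>0$, set $G(\alpha,\ell)=\int_0^1 t^\alpha a^{\ell(1-t)}b^{\ell t}\,dt$. For $x,y>0$, $x\neq y$, the logarithmic mean is $L(x,y)=\frac{y-x}{\ln y-\ln x}$. *)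

theory Defs
  imports "HOL-Analysis.Analysis"
begin

text \<open>Real power with the convention 0^0 = 1 (Isabelle's powr has 0 powr 0 = 0).\<close>
definition rpow0 :: "real \<Rightarrow> real \<Rightarrow> real" where
  "rpow0 x t = (if t = 0 then 1 else x powr t)"

definition GA_convex :: "real \<Rightarrow> real \<Rightarrow> real \<Rightarrow> (real \<Rightarrow> real) \<Rightarrow> bool" where
  "GA_convex \<alpha> m c h \<longleftrightarrow>
     (\<forall>x\<in>{0..c}. \<forall>y\<in>{0..c}. \<forall>t\<in>{0..1}.
        h (rpow0 x t * rpow0 y (m * (1 - t)))
          \<le> rpow0 t \<alpha> * h x + m * (1 - rpow0 t \<alpha>) * h y)"

definition Gfun :: "real \<Rightarrow> real \<Rightarrow> real \<Rightarrow> real \<Rightarrow> real" where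
  "Gfun a b \<alpha> l = integral {0..1} (\<lambda>t. t powr \<alpha> * a powr (l * (1 - t)) * b powr (l * t))"

definition logmean :: "real \<Rightarrow> real \<Rightarrow> real" where
  "logmean x y = (y - x) / (ln y - ln x)"

end

theory Submission
  imports Defs
begin

text \<open>Integration by parts gives \<open>(b^2 f(b) - a^2 f(a))/2 - \<integral>\<^sub>a\<^sup>b x f(x) dx = \<integral>\<^sub>a\<^sup>b x^2 f'(x)/2 dx\<close>,
  and the substitution \<open>x = a^(1-t) b^t\<close> turns this into \<open>(ln b - ln a)/2 \<cdot> \<integral>\<^sub>0\<^sup>1 x^3 f'(x) dt\<close>.
  The power mean inequality with weight \<open>x^3\<close> bounds the latter by
  \<open>(\<integral> x^3)^(1-1/q) (\<integral> x^3 |f'(x)|^q)^(1/q)\<close>. Along this path GA-convexity gives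
  \<open>|f'(x)|^q \<le> t^\<alpha> |f'(b)|^q + m (1 - t^\<alpha>) |f'(a^(1/m))|^q\<close>, and the resulting integrals of
  \<open>x^3\<close> and \<open>t^\<alpha> x^3\<close> over \<open>[0,1]\<close> are \<open>L(a^3,b^3)\<close> and \<open>G(\<alpha>,3)\<close>.\<close>

definition geom_interp :: "real \<Rightarrow> real \<Rightarrow> real \<Rightarrow> real" where
  "geom_interp a b t = a powr (1 - t) * b powr t"

lemma geom_interp_eq_exp:
  assumes "0 < a" "0 < b"
  shows "geom_interp a b t = exp (ln a + t * (ln b - ln a))"
  using assms by (simp add: geom_interp_def powr_def exp_add[symmetric] algebra_simps)

lemma geom_interp_pos: "0 < a \<Longrightarrow> 0 < b \<Longrightarrow> 0 < geom_interp a b t"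
  by (simp add: geom_interp_eq_exp)

lemma geom_interp_0: "0 < a \<Longrightarrow> 0 < b \<Longrightarrow> geom_interp a b 0 = a"
  and geom_interp_1: "0 < a \<Longrightarrow> 0 < b \<Longrightarrow> geom_interp a b 1 = b"
  by (simp_all add: geom_interp_eq_exp)

lemma geom_interp_in_interval:
  assumes "0 < a" "a \<le> b" "t \<in> {0..1}"
  shows "geom_interp a b t \<in> {a..b}"
proof -
  have "ln a \<le> ln b" using assms by simp
  then have "0 \<le> t * (ln b - ln a)" "t * (ln b - ln a) \<le> ln b - ln a"
    using assms(3) by (auto simp: mult_left_le_one_le)
  then have "exp (ln a) \<le> exp (ln a + t * (ln b - ln a))"
    "exp (ln a + t * (ln b - ln a)) \<le> exp (ln a + (ln b - ln a))"
    by simp_all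
  then show ?thesis using assms by (simp add: geom_interp_eq_exp)
qed

lemma has_real_derivative_geom_interp:
  assumes "0 < a" "0 < b"
  shows "(geom_interp a b has_real_derivative (ln b - ln a) * geom_interp a b t) (at t within S)"
  unfolding geom_interp_eq_exp[OF assms, abs_def] geom_interp_eq_exp[OF assms]
  by (auto intro!: derivative_eq_intros)

lemma geom_interp_power:
  assumes "0 < a" "0 < b"
  shows "geom_interp a b t ^ n = a powr (n * (1 - t)) * b powr (n * t)"
  using assms by (simp add: geom_interp_def power_mult_distrib powr_realpow[symmetric] powr_powr
      mult.commute)

lemma has_integral_geom_interp_substitution:
  assumes "0 < a" "a \<le> b"
    and F': "\<And>x. x \<in> {a..b} \<Longrightarrow> (F has_real_derivative F' x) (at x within {a..b})"
  shows "((\<lambda>t. (ln b - ln a) * geom_interp a b t * F' (geom_interp a b t)) has_integral F b - F a)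
    {0..1}"
proof -
  let ?\<phi> = "geom_interp a b"
  have b: "0 < b" using assms by simp
  have "((F \<circ> ?\<phi>) has_real_derivative (ln b - ln a) * ?\<phi> t * F' (?\<phi> t)) (at t within {0..1})"
    if t: "t \<in> {0..1}" for t
  proof -
    have "(F has_real_derivative F' (?\<phi> t)) (at (?\<phi> t) within ?\<phi> ` {0..1})"
      using F' geom_interp_in_interval[OF assms(1,2)] t by (blast intro: DERIV_subset)
    from DERIV_image_chain[OF this has_real_derivative_geom_interp[OF assms(1) b]]
    show ?thesis by (simp add: mult.commute mult.left_commute)
  qed
  then have "((\<lambda>t. (ln b - ln a) * ?\<phi> t * F' (?\<phi> t)) has_integral (F \<circ> ?\<phi>) 1 - (F \<circ> ?\<phi>) 0) {0..1}"
    by (intro fundamental_theorem_of_calculus)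
      (auto simp: has_real_derivative_iff_has_vector_derivative[symmetric] o_def)
  then show ?thesis using assms(1) b by (simp add: geom_interp_0 geom_interp_1)
qed

lemma has_integral_geom_interp_power:
  assumes "0 < a" "0 < b" "a \<noteq> b" "n > 0"
  shows "((\<lambda>t. geom_interp a b t ^ n) has_integral logmean (a ^ n) (b ^ n)) {0..1}"
proof -
  let ?\<phi> = "geom_interp a b"
  have c: "ln b - ln a \<noteq> 0" using assms by simp
  have "((\<lambda>t. ?\<phi> t ^ n / (n * (ln b - ln a))) has_real_derivative ?\<phi> t ^ n) (at t within {0..1})"
    for t
    using assms c
    by (auto intro!: derivative_eq_intros has_real_derivative_geom_interp
        simp: power_Suc[symmetric] simp del: power_Suc)
  then have "((\<lambda>t. ?\<phi> t ^ n) has_integral ?\<phi> 1 ^ n / (n * (ln b - ln a)) - ?\<phi> 0 ^ n / (n * (ln b - ln a)))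
      {0..1}"
    by (intro fundamental_theorem_of_calculus)
      (auto simp: has_real_derivative_iff_has_vector_derivative[symmetric])
  then show ?thesis
    using assms by (simp add: geom_interp_0 geom_interp_1 logmean_def ln_realpow
        diff_divide_distrib right_diff_distrib)
qed

lemma has_integral_Gfun:
  assumes "0 < a" "0 < b" "0 < \<alpha>"
  shows "((\<lambda>t. t powr \<alpha> * geom_interp a b t ^ n) has_integral Gfun a b \<alpha> n) {0..1}"
proof -
  have "continuous_on {0..1} (\<lambda>t. t powr \<alpha> * geom_interp a b t ^ n)"
    using assms unfolding geom_interp_eq_exp[OF assms(1,2)]
    by (intro continuous_intros continuous_on_powr') auto
  then have "((\<lambda>t. t powr \<alpha> * geom_interp a b t ^ n) has_integral
      integral {0..1} (\<lambda>t. t powr \<alpha> * geom_interp a b t ^ n)) {0..1}"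
    by (intro integrable_integral integrable_continuous_interval)
  then show ?thesis
    using assms by (simp add: Gfun_def geom_interp_power mult.assoc)
qed

lemma has_integral_GA_majorant:
  assumes "0 < a" "0 < b" "a \<noteq> b" "0 < \<alpha>" "n > 0"
  shows "((\<lambda>t. geom_interp a b t ^ n * (t powr \<alpha> * P + m * (1 - t powr \<alpha>) * Q)) has_integral
      m * (logmean (a ^ n) (b ^ n) - Gfun a b \<alpha> n) * Q + Gfun a b \<alpha> n * P) {0..1}"
proof -
  have "((\<lambda>t. (m * Q) * geom_interp a b t ^ n + (P - m * Q) * (t powr \<alpha> * geom_interp a b t ^ n))
      has_integral (m * Q) * logmean (a ^ n) (b ^ n) + (P - m * Q) * Gfun a b \<alpha> n) {0..1}"
    using assms
    by (intro has_integral_add has_integral_mult_right has_integral_geom_interp_power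
        has_integral_Gfun)
  then show ?thesis
    by (simp add: algebra_simps)
qed

lemma rpow0_pos: "0 < x \<Longrightarrow> rpow0 x t = x powr t"
  by (simp add: rpow0_def)

lemma GA_convex_geom_interp:
  assumes conv: "GA_convex \<alpha> m c g" and "0 < \<alpha>" "0 < m" "0 < a" "0 < b"
    and "a powr (1/m) \<le> c" "b \<le> c" "t \<in> {0..1}"
  shows "g (geom_interp a b t) \<le> t powr \<alpha> * g b + m * (1 - t powr \<alpha>) * g (a powr (1/m))"
proof -
  have "rpow0 b t * rpow0 (a powr (1/m)) (m * (1 - t)) = geom_interp a b t"
    using assms by (simp add: rpow0_pos geom_interp_def powr_powr mult.commute)
  moreover have "rpow0 t \<alpha> = t powr \<alpha>"
    using assms(2) by (simp add: rpow0_def)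
  moreover have "b \<in> {0..c}" "a powr (1/m) \<in> {0..c}"
    using assms by auto
  ultimately show ?thesis
    using conv \<open>t \<in> {0..1}\<close> unfolding GA_convex_def by metis
qed

lemma Young_tangent_bound:
  fixes u s q :: real
  assumes "0 \<le> u" "0 < s" "1 \<le> q"
  shows "u \<le> (1 - 1/q) * s + (1/q) * (s powr (1 - q) * u powr q)"
proof (cases "u = 0")
  case True
  then show ?thesis using assms by simp
next
  case False
  then have u: "0 < u" using assms by simp
  have "u = (s powr (1 - q) * u powr q) powr (1/q) * s powr (1 - 1/q)"
  proof -
    have "(s powr (1 - q) * u powr q) powr (1/q) * s powr (1 - 1/q)
        = u * s powr ((1 - q)/q + (1 - 1/q))"
      using assms u by (simp add: powr_mult powr_powr powr_add)
    also have "(1 - q)/q + (1 - 1/q) = 0"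
      using assms by (simp add: field_simps)
    finally show ?thesis using assms by simp
  qed
  also have "\<dots> \<le> (1/q) * (s powr (1 - q) * u powr q) + (1 - 1/q) * s"
    using assms u by (intro Youngs_inequality_0) (auto simp: divide_simps)
  finally show ?thesis by simp
qed

text \<open>The right-hand side of the hypothesis is minimal at \<open>s = (B/A)^(1/q)\<close>.\<close>

lemma le_powr_mult_powr_of_tangent_bounds:
  fixes X A B q :: real
  assumes A: "0 < A" and B: "0 \<le> B" and q: "1 \<le> q"
    and H: "\<And>s. 0 < s \<Longrightarrow> X \<le> (1 - 1/q) * s * A + (1/q) * (s powr (1 - q) * B)"
  shows "X \<le> A powr (1 - 1/q) * B powr (1/q)"
proof (cases "B = 0")
  case True
  show ?thesis
  proof (rule ccontr)
    assume "\<not> ?thesis"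
    then have X: "0 < X" using \<open>B = 0\<close> by simp
    have "X \<le> (1 - 1/q) * (X / (2 * A)) * A"
      using H[of "X / (2 * A)"] X A \<open>B = 0\<close> by simp
    also have "\<dots> = (1 - 1/q) * X / 2" using A by simp
    also have "\<dots> < X" using X q by (simp add: field_simps add_pos_nonneg)
    finally show False by simp
  qed
next
  case False
  then have B: "0 < B" using B by simp
  define s where "s = B powr (1/q) * A powr (- (1/q))"
  have "s * A = A powr (1 - 1/q) * B powr (1/q)"
    using A by (simp add: s_def powr_minus_divide powr_diff)
  moreover have "s powr (1 - q) * B = A powr (1 - 1/q) * B powr (1/q)"
  proof -
    have "s powr (1 - q) * B = A powr (- (1/q) * (1 - q)) * B powr (1/q * (1 - q) + 1)"
      using A B by (simp add: s_def powr_mult powr_powr powr_add)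
    also have "- (1/q) * (1 - q) = 1 - 1/q"
      using q by (simp add: field_simps)
    also have "1/q * (1 - q) + 1 = 1/q"
      using q by (simp add: field_simps)
    finally show ?thesis .
  qed
  moreover have "0 < s" using A B by (simp add: s_def)
  ultimately show ?thesis
    using H[of s] by (simp add: field_simps)
qed

text \<open>Bounding \<open>u\<close> pointwise by Young's inequality lets the integrable majorant \<open>v\<close> stand in
  for \<open>w u^q\<close>, which need not be integrable.\<close>

lemma has_integral_power_mean_bound:
  fixes h w u v :: "real \<Rightarrow> real"
  assumes h: "(h has_integral I) S" and w: "(w has_integral W) S" and v: "(v has_integral V) S"
    and W: "0 < W" and q: "1 \<le> q"
    and w_nonneg: "\<And>t. t \<in> S \<Longrightarrow> 0 \<le> w t" and u_nonneg: "\<And>t. t \<in> S \<Longrightarrow> 0 \<le> u t"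
    and h_le: "\<And>t. t \<in> S \<Longrightarrow> \<bar>h t\<bar> \<le> w t * u t"
    and v_ge: "\<And>t. t \<in> S \<Longrightarrow> w t * u t powr q \<le> v t"
  shows "\<bar>I\<bar> \<le> W powr (1 - 1/q) * V powr (1/q)"
proof (rule le_powr_mult_powr_of_tangent_bounds[OF W _ q])
  show "0 \<le> V"
  proof (rule has_integral_nonneg[OF v])
    fix t assume "t \<in> S"
    then show "0 \<le> v t"
      using w_nonneg v_ge by (meson mult_nonneg_nonneg order_trans powr_ge_zero)
  qed
next
  fix s :: real
  assume s: "0 < s"
  have bound_integral: "((\<lambda>t. (1 - 1/q) * s * w t + (1/q) * s powr (1 - q) * v t) has_integral
      (1 - 1/q) * s * W + (1/q) * s powr (1 - q) * V) S"
    by (intro has_integral_add has_integral_mult_right w v)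
  have "norm (h t) \<le> (1 - 1/q) * s * w t + (1/q) * s powr (1 - q) * v t" if t: "t \<in> S" for t
  proof -
    have "\<bar>h t\<bar> \<le> w t * ((1 - 1/q) * s + (1/q) * (s powr (1 - q) * u t powr q))"
      using h_le[OF t] Young_tangent_bound[OF u_nonneg[OF t] s q] w_nonneg[OF t]
      by (meson mult_left_mono order_trans)
    also have "\<dots> = (1 - 1/q) * s * w t + (1/q) * s powr (1 - q) * (w t * u t powr q)"
      by (simp add: algebra_simps)
    also have "\<dots> \<le> (1 - 1/q) * s * w t + (1/q) * s powr (1 - q) * v t"
      using v_ge[OF t] q by (intro add_left_mono mult_left_mono) auto
    finally show ?thesis by simp
  qed
  then have "norm (integral S h) \<le>
      integral S (\<lambda>t. (1 - 1/q) * s * w t + (1/q) * s powr (1 - q) * v t)"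
    using h bound_integral by (intro integral_norm_bound_integral) auto
  then have "norm I \<le> (1 - 1/q) * s * W + (1/q) * s powr (1 - q) * V"
    using h bound_integral by (simp add: integral_unique)
  then show "\<bar>I\<bar> \<le> (1 - 1/q) * s * W + (1/q) * (s powr (1 - q) * V)"
    by simp
qed

lemma has_real_derivative_moment_by_parts:
  assumes f': "\<And>x. x \<in> {a..b} \<Longrightarrow> (f has_real_derivative f' x) (at x within {a..b})"
    and x: "x \<in> {a..b}"
  shows "((\<lambda>x. x^2 * f x / 2 - integral {a..x} (\<lambda>s. s * f s)) has_real_derivative x^2 * f' x / 2)
    (at x within {a..b})"
proof -
  have "continuous_on {a..b} (\<lambda>s. s * f s)"
    using DERIV_continuous_on[OF f'] by (intro continuous_intros)
  from integral_has_vector_derivative[OF this x]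
  have integral_deriv:
    "((\<lambda>x. integral {a..x} (\<lambda>s. s * f s)) has_real_derivative x * f x) (at x within {a..b})"
    by (simp add: has_real_derivative_iff_has_vector_derivative)
  have "((\<lambda>x. x^2 * f x / 2) has_real_derivative (2 * x * f x + x^2 * f' x) / 2)
      (at x within {a..b})"
    using f'[OF x] by (auto intro!: derivative_eq_intros)
  from DERIV_diff[OF this integral_deriv] show ?thesis
    by (rule DERIV_cong) (simp add: field_simps power2_eq_square)
qed

lemma has_integral_moment_by_parts_geom_interp:
  assumes "0 < a" "a < b"
    and f': "\<And>x. x \<in> {a..b} \<Longrightarrow> (f has_real_derivative f' x) (at x within {a..b})"
  shows "((\<lambda>t. geom_interp a b t ^ 3 * f' (geom_interp a b t)) has_integral
      2 / (ln b - ln a) * ((b^2 * f b - a^2 * f a) / 2 - integral {a..b} (\<lambda>x. x * f x))) {0..1}"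
    (is "(_ has_integral 2 / ?c * ?I) _")
proof -
  let ?\<phi> = "geom_interp a b"
  from has_integral_geom_interp_substitution[OF assms(1) less_imp_le[OF assms(2)]
      has_real_derivative_moment_by_parts[OF f']]
  have substituted: "((\<lambda>t. ?c * ?\<phi> t * (?\<phi> t ^ 2 * f' (?\<phi> t) / 2)) has_integral ?I) {0..1}"
    by (rule has_integral_eq_rhs) (simp_all add: diff_divide_distrib)
  have "2 / ?c * (?c * ?\<phi> t * (?\<phi> t ^ 2 * f' (?\<phi> t) / 2)) = ?\<phi> t ^ 3 * f' (?\<phi> t)" for t
    using assms by (simp add: power3_eq_cube power2_eq_square)
  with has_integral_mult_right[OF substituted, of "2 / ?c"] show ?thesis
    by simp
qed

theorem theorem3p1:
  fixes f f' :: "real \<Rightarrow> real" and a b \<alpha> m q :: real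
  assumes deriv: "\<And>x. x \<ge> 0 \<Longrightarrow> (f has_real_derivative f' x) (at x within {0..})"
    and ab: "0 < a" "a < b"
    and integ: "set_integrable lborel {a..b} f'"
    and \<alpha>: "0 < \<alpha>" "\<alpha> \<le> 1" and m: "0 < m" "m \<le> 1"
    and q: "q \<ge> 1"
    and conv: "GA_convex \<alpha> m (max (a powr (1/m)) b) (\<lambda>x. \<bar>f' x\<bar> powr q)"
  shows "\<bar>(b^2 * f b - a^2 * f a) / 2 - integral {a..b} (\<lambda>x. x * f x)\<bar>
    \<le> (ln b - ln a) / 2 * (logmean (a^3) (b^3)) powr (1 - 1/q)
       * (m * (logmean (a^3) (b^3) - Gfun a b \<alpha> 3) * \<bar>f' (a powr (1/m))\<bar> powr q
          + Gfun a b \<alpha> 3 * \<bar>f' b\<bar> powr q) powr (1/q)"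
    (is "\<bar>?I\<bar> \<le> ?c / 2 * ?L powr _ * ?B powr _")
proof -
  let ?\<phi> = "geom_interp a b"
  have c: "0 < ?c" and \<phi>_pos: "\<And>t. 0 < ?\<phi> t"
    using ab by (simp_all add: geom_interp_pos)
  have "(f has_real_derivative f' x) (at x within {a..b})" if "x \<in> {a..b}" for x
    using DERIV_subset[OF deriv[of x], of "{a..b}"] that ab by auto
  then have by_parts: "((\<lambda>t. ?\<phi> t ^ 3 * f' (?\<phi> t)) has_integral 2 / ?c * ?I) {0..1}"
    by (rule has_integral_moment_by_parts_geom_interp[OF ab])
  have weight: "((\<lambda>t. ?\<phi> t ^ 3) has_integral ?L) {0..1}"
    by (rule has_integral_geom_interp_power) (use ab in auto)
  have "0 < ?L"
    using ab by (simp add: logmean_def ln_realpow power_strict_mono)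
  have majorant: "((\<lambda>t. ?\<phi> t ^ 3 * (t powr \<alpha> * \<bar>f' b\<bar> powr q
      + m * (1 - t powr \<alpha>) * \<bar>f' (a powr (1/m))\<bar> powr q)) has_integral ?B) {0..1}"
    using has_integral_GA_majorant[of a b \<alpha> 3] ab \<alpha> by simp
  have bound: "\<bar>2 / ?c * ?I\<bar> \<le> ?L powr (1 - 1/q) * ?B powr (1/q)"
  proof (rule has_integral_power_mean_bound[OF by_parts weight majorant \<open>0 < ?L\<close> q,
        where u = "\<lambda>t. \<bar>f' (?\<phi> t)\<bar>"])
    fix t :: real assume t: "t \<in> {0..1}"
    have "\<bar>f' (?\<phi> t)\<bar> powr q \<le> t powr \<alpha> * \<bar>f' b\<bar> powr q + m * (1 - t powr \<alpha>) * \<bar>f' (a powr (1/m))\<bar> powr q"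
      using GA_convex_geom_interp[OF conv \<alpha>(1) m(1) ab(1) _ _ _ t] ab by auto
    then show "?\<phi> t ^ 3 * \<bar>f' (?\<phi> t)\<bar> powr q \<le> ?\<phi> t ^ 3 * (t powr \<alpha> * \<bar>f' b\<bar> powr q
        + m * (1 - t powr \<alpha>) * \<bar>f' (a powr (1/m))\<bar> powr q)"
      using \<phi>_pos[of t] by simp
  qed (use \<phi>_pos in \<open>auto simp: abs_mult less_imp_le\<close>)
  have rescale: "\<bar>x\<bar> = ?c / 2 * \<bar>2 / ?c * x\<bar>" for x :: real
    using c by (simp add: abs_mult)
  have "\<bar>?I\<bar> = ?c / 2 * \<bar>2 / ?c * ?I\<bar>"
    by (rule rescale)
  also have "\<dots> \<le> ?c / 2 * (?L powr (1 - 1/q) * ?B powr (1/q))"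
    using bound c by (intro mult_left_mono) auto
  finally show ?thesis
    by (simp only: mult.assoc)
qed

end
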